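(* Consider the system $\dot x=f(x)$, $y=h(x)$ with $x\in\mathbb{R}^n$, $y\in\mathbb{R}^p$, satisfying assumptions (A.1)–(A.3) below, and assume it is forward complete. Let $V$ be a SIoGAS-Lyapunov function for this system which satisfies $$DV(x)f(x)\le -k_1V(x)^\mu-k_2V(x)^\nu\quad\text{for all }x\in\mathbb{R}^n\setminus\mathcal{Y}$$ for some $k_1,k_2>0$, $\mu\in(0,1)$, $\nu>1$. Then the system is SIoGAS and output fixed-time stable (OFxTS), and the settling-time function satisfies $T(x_0)\le\frac{1}{k_1(1-\mu)}+\frac{1}{k_2(\nu-1)}$ for all $x_0\in\mathbb{R}^n$.
   Context: Standing assumptions: (A.1) $f:\mathbb{R}^n\to\mathbb{R}^n$ ensures forward existence and uniqueness of solutions (in the Filippov sense) at least locally in time, and $f(0)=0$; (A.2) $h:\mathbb{R}^n\to\mathbb{R}^p$ is continuously differentiable with $h(0)=0$; (A.3) $f$ is locally Lipschitz on $\mathbb{R}^n\setminus\mathcal{Y}$, where $\mathcal{Y}=\{x: h(x)=0\}$. $\Phi(t,x_0)$ denotes the unique maximal solution on $[0,T_s(x_0))$ and $Y(t,x_0)=h(\Phi(t,x_0))$. Forward complete: $T_s(x_0)=+\infty$ for all $x_0$. $\mathcal{K}$, $\mathcal{K}_\infty$, $\mathcal{KL}$ are the standard comparison function classes. $DV(x)f(x)$ denotes the derivative of $V$ along $f$. The system is SIoGAS if it is forward complete and there is $\beta\in\mathcal{KL}$ with $|Y(t,x_0)|\le\beta(|h(x_0)|,t)$ for all $t\ge0$,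 $x_0$. A smooth $V$ is a SIoGAS-Lyapunov function if there exist $\xi_1,\xi_2\in\mathcal{K}_\infty$ with $\xi_1(|h(x)|)\le V(x)\le\xi_2(|h(x)|)$ for all $x$ and $\xi_3\in\mathcal{K}$ with $DV(x)f(x)\le-\xi_3(V(x))$ on $\mathbb{R}^n\setminus\mathcal{Y}$. The system is oGAS if it is forward complete and there is $\beta\in\mathcal{KL}$ with $|Y(t,x_0)|\le\beta(|x_0|,t)$ for all $t\ge 0$, $x_0$. It is output finite-time stable (OFTS) if it is oGAS and for every $x_0$ there is a finite $T_0\ge0$ with $Y(t,x_0)=0$ for all $t>T_0$; the settling-time function is $T(x_0)=\inf\{T_0\ge0: Y(t,x_0)=0\ \forall t\ge T_0\}$. It is OFxTS if it is OFTS and $\sup_{x_0\in\mathbb{R}^n}T(x_0)<\infty$. *)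

theory Defs
  imports "HOL-Analysis.Analysis"
begin

definition class_K :: "(real \<Rightarrow> real) \<Rightarrow> bool" where
  "class_K \<alpha> \<longleftrightarrow> continuous_on {0..} \<alpha> \<and> \<alpha> 0 = 0 \<and> strict_mono_on {0..} \<alpha>"

definition class_Kinf :: "(real \<Rightarrow> real) \<Rightarrow> bool" where
  "class_Kinf \<alpha> \<longleftrightarrow> class_K \<alpha> \<and> filterlim \<alpha> at_top at_top"

definition class_KL :: "(real \<Rightarrow> real \<Rightarrow> real) \<Rightarrow> bool" where
  "class_KL \<beta> \<longleftrightarrow>
     continuous_on ({0..} \<times> {0..}) (\<lambda>(r, t). \<beta> r t) \<and>
     (\<forall>t\<ge>0. class_K (\<lambda>r. \<beta> r t)) \<and>
     (\<forall>r\<ge>0. antimono_on {0..} (\<beta> r) \<and> ((\<beta> r) \<longlongrightarrow> 0) at_top)"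

definition C1_map :: "('a::real_normed_vector \<Rightarrow> 'b::real_normed_vector) \<Rightarrow> bool" where
  "C1_map F \<longleftrightarrow> (\<exists>DF :: 'a \<Rightarrow> ('a \<Rightarrow>\<^sub>L 'b).
      continuous_on UNIV DF \<and> (\<forall>x. (F has_derivative blinfun_apply (DF x)) (at x)))"

definition lie_deriv :: "('a::real_normed_vector \<Rightarrow> real) \<Rightarrow> ('a \<Rightarrow> 'a) \<Rightarrow> 'a \<Rightarrow> real" where
  "lie_deriv V f x = frechet_derivative V (at x) (f x)"

definition filippov_set :: "('a::euclidean_space \<Rightarrow> 'a) \<Rightarrow> 'a \<Rightarrow> 'a set" where
  "filippov_set f x =
     (\<Inter>\<delta>\<in>{0<..}. \<Inter>N\<in>null_sets lborel. closure (convex hull (f ` (ball x \<delta> - N))))"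

text \<open>z is a Filippov solution of x' = f(x) on the interval I (containing 0) with z(0) = x0:
  z is absolutely continuous on compact subintervals, i.e. an indefinite Lebesgue integral,
  and its derivative lies in the Filippov set almost everywhere.\<close>
definition filippov_solution ::
    "('a::euclidean_space \<Rightarrow> 'a) \<Rightarrow> 'a \<Rightarrow> real set \<Rightarrow> (real \<Rightarrow> 'a) \<Rightarrow> bool" where
  "filippov_solution f x0 I z \<longleftrightarrow>
     z 0 = x0 \<and>
     (\<exists>g. (\<forall>t\<in>I. g absolutely_integrable_on {0..t} \<and> (g has_integral (z t - x0)) {0..t}) \<and>
          (AE t in lborel. t \<in> I \<longrightarrow> g t \<in> filippov_set f (z t)))"

section \<open>Output stability notions (forward completeness is built into \<Phi> being defined on [0,\<infinity>))\<close>

definition SIoGAS :: "('n \<Rightarrow> 'p::real_normed_vector) \<Rightarrow> (real \<Rightarrow> 'n \<Rightarrow> 'n) \<Rightarrow> bool" where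
  "SIoGAS h \<Phi> \<longleftrightarrow> (\<exists>\<beta>. class_KL \<beta> \<and>
      (\<forall>t\<ge>0. \<forall>x0. norm (h (\<Phi> t x0)) \<le> \<beta> (norm (h x0)) t))"

definition SIoGAS_Lyapunov ::
    "('n::real_normed_vector \<Rightarrow> 'n) \<Rightarrow> ('n \<Rightarrow> 'p::real_normed_vector) \<Rightarrow> ('n \<Rightarrow> real) \<Rightarrow> bool" where
  "SIoGAS_Lyapunov f h V \<longleftrightarrow> C1_map V \<and>
     (\<exists>\<xi>1 \<xi>2 \<xi>3. class_Kinf \<xi>1 \<and> class_Kinf \<xi>2 \<and> class_K \<xi>3 \<and>
        (\<forall>x. \<xi>1 (norm (h x)) \<le> V x \<and> V x \<le> \<xi>2 (norm (h x))) \<and>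
        (\<forall>x. h x \<noteq> 0 \<longrightarrow> lie_deriv V f x \<le> - \<xi>3 (V x)))"

definition oGAS :: "('n::real_normed_vector \<Rightarrow> 'p::real_normed_vector) \<Rightarrow> (real \<Rightarrow> 'n \<Rightarrow> 'n) \<Rightarrow> bool" where
  "oGAS h \<Phi> \<longleftrightarrow> (\<exists>\<beta>. class_KL \<beta> \<and>
      (\<forall>t\<ge>0. \<forall>x0. norm (h (\<Phi> t x0)) \<le> \<beta> (norm x0) t))"

definition OFTS :: "('n::real_normed_vector \<Rightarrow> 'p::real_normed_vector) \<Rightarrow> (real \<Rightarrow> 'n \<Rightarrow> 'n) \<Rightarrow> bool" where
  "OFTS h \<Phi> \<longleftrightarrow> oGAS h \<Phi> \<and> (\<forall>x0. \<exists>T0\<ge>0. \<forall>t>T0. h (\<Phi> t x0) = 0)"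

definition settling_time :: "('n \<Rightarrow> 'p::zero) \<Rightarrow> (real \<Rightarrow> 'n \<Rightarrow> 'n) \<Rightarrow> 'n \<Rightarrow> real" where
  "settling_time h \<Phi> x0 = Inf {T0. T0 \<ge> 0 \<and> (\<forall>t\<ge>T0. h (\<Phi> t x0) = 0)}"

definition OFxTS :: "('n::real_normed_vector \<Rightarrow> 'p::real_normed_vector) \<Rightarrow> (real \<Rightarrow> 'n \<Rightarrow> 'n) \<Rightarrow> bool" where
  "OFxTS h \<Phi> \<longleftrightarrow> OFTS h \<Phi> \<and> bdd_above (range (settling_time h \<Phi>))"

end

theory Submission
  imports Defs
begin

text \<open>
  Along a solution, W t = V (\<Phi> t x0) is continuous, and wherever W is positive the output is
  nonzero, so f is locally Lipschitz, the Filippov set reduces to f itself and the chain rule gives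
  W' \<le> - k1 W powr \<mu> - k2 W powr \<nu>.  Comparing W powr (1 - \<nu>) with a line shows that W drops
  below 1 before time 1 / (k2 (\<nu> - 1)), whatever its initial value; comparing W powr (1 - \<mu>) with
  a line then shows that it vanishes within another 1 / (k1 (1 - \<mu>)).  As W is nonincreasing, the
  sandwich \<xi>1 |h| \<le> V \<le> \<xi>2 |h| bounds |h (\<Phi> t x0)| by a class-K function of |h x0|; a cutoff
  decaying after the settling time turns this into a KL bound, and a class-K majorant of |h x| in
  terms of |x| into the oGAS bound.
\<close>

section \<open>Filippov solutions\<close>

lemma filippov_set_subset_at_continuity:
  fixes f :: "'a::euclidean_space \<Rightarrow> 'a"
  assumes "isCont f x"
  shows "filippov_set f x \<subseteq> {f x}"
proof
  fix v assume v: "v \<in> filippov_set f x"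
  have "dist v (f x) \<le> 0 + e" if "e > 0" for e
  proof -
    obtain d where "d > 0" and d: "\<And>y. dist y x < d \<Longrightarrow> dist (f y) (f x) < e"
      using assms \<open>e > 0\<close> unfolding continuous_at_eps_delta by blast
    have "f ` (ball x d - {}) \<subseteq> cball (f x) e"
      using d by (auto simp: dist_commute less_imp_le)
    then have "closure (convex hull (f ` (ball x d - {}))) \<subseteq> cball (f x) e"
      by (meson closed_cball closure_minimal convex_cball hull_minimal)
    moreover have "v \<in> closure (convex hull (f ` (ball x d - {})))"
      using v \<open>d > 0\<close> unfolding filippov_set_def by blast
    ultimately show ?thesis by (auto simp: dist_commute)
  qed
  then show "v \<in> {f x}"
    using field_le_epsilon[of "dist v (f x)" 0] by simp
qed

lemma filippov_solution_integral_form: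
  assumes "filippov_solution f x0 {0..} z"
  obtains g where "\<And>t. 0 \<le> t \<Longrightarrow> g integrable_on {0..t}"
    and "\<And>t. 0 \<le> t \<Longrightarrow> z t = x0 + integral {0..t} g"
    and "AE t in lborel. 0 \<le> t \<longrightarrow> g t \<in> filippov_set f (z t)"
proof -
  obtain g where g: "\<forall>t\<in>{0..}. g absolutely_integrable_on {0..t} \<and> (g has_integral (z t - x0)) {0..t}"
    and ae: "AE t in lborel. t \<in> {0..} \<longrightarrow> g t \<in> filippov_set f (z t)"
    using assms unfolding filippov_solution_def by blast
  show ?thesis
  proof (rule that)
    show "g integrable_on {0..t}" if "0 \<le> t" for t
      using g that by (meson atLeast_iff has_integral_integrable)
    show "z t = x0 + integral {0..t} g" if "0 \<le> t" for t
      using g that by (metis atLeast_iff add.commute diff_add_cancel integral_unique)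
    show "AE t in lborel. 0 \<le> t \<longrightarrow> g t \<in> filippov_set f (z t)"
      using ae by simp
  qed
qed

lemma filippov_solution_continuous_on:
  assumes "filippov_solution f x0 {0..} z"
  shows "continuous_on {0..} z"
  unfolding continuous_on_eq_continuous_within
proof
  fix t :: real assume "t \<in> {0..}"
  obtain g where int: "\<And>t. 0 \<le> t \<Longrightarrow> g integrable_on {0..t}"
    and z: "\<And>t. 0 \<le> t \<Longrightarrow> z t = x0 + integral {0..t} g"
    using filippov_solution_integral_form[OF assms] by metis
  have "continuous_on {0..t+1} (\<lambda>s. x0 + integral {0..s} g)"
    using int[of "t+1"] \<open>t \<in> {0..}\<close> by (intro continuous_intros indefinite_integral_continuous_1) auto
  then have "continuous_on {0..t+1} z"
    by (rule continuous_on_eq) (simp add: z)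
  then have "continuous (at t within {0..t+1}) z"
    using \<open>t \<in> {0..}\<close> by (simp add: continuous_on_eq_continuous_within)
  moreover have "at t within {0..} = at t within {0..t+1}"
    by (rule at_within_nhd[of _ "{..<t+1}"]) auto
  ultimately show "continuous (at t within {0..}) z" by simp
qed

lemma filippov_solution_integral_equation:
  fixes f :: "'a::euclidean_space \<Rightarrow> 'a"
  assumes sol: "filippov_solution f x0 {0..} z" and "0 \<le> a" "a \<le> s"
    and f_cont: "\<And>r. r \<in> {a..s} \<Longrightarrow> isCont f (z r)"
  shows "integral {a..s} (f \<circ> z) + z a = z s"
proof -
  obtain g where z: "\<And>t. 0 \<le> t \<Longrightarrow> z t = x0 + integral {0..t} g"
    and g_int: "\<And>t. 0 \<le> t \<Longrightarrow> g integrable_on {0..t}"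
    and g_ae: "AE t in lborel. 0 \<le> t \<longrightarrow> g t \<in> filippov_set f (z t)"
    using filippov_solution_integral_form[OF sol] by metis
  obtain N where N: "N \<in> null_sets lborel"
    and g_N: "\<And>r. r \<notin> N \<Longrightarrow> 0 \<le> r \<Longrightarrow> g r \<in> filippov_set f (z r)"
    using AE_E3[OF g_ae] by auto
  have "negligible N"
    using N by (simp add: negligible_iff_null_sets null_sets_completionI)
  have "integral {0..s} g = integral {0..a} g + integral {a..s} g"
    using assms(2,3) g_int[of s] by (simp add: Henstock_Kurzweil_Integration.integral_combine)
  moreover have "integral {a..s} g = integral {a..s} (f \<circ> z)"
  proof (rule integral_spike[OF \<open>negligible N\<close>])
    fix r assume "r \<in> {a..s} - N"
    then show "(f \<circ> z) r = g r"
      using filippov_set_subset_at_continuity[OF f_cont] g_N[of r] \<open>0 \<le> a\<close> by fastforce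
  qed
  ultimately show ?thesis
    using assms(2,3) z[of s] z[of a] by simp
qed

lemma filippov_solution_has_vector_derivative:
  fixes f :: "'a::euclidean_space \<Rightarrow> 'a"
  assumes sol: "filippov_solution f x0 {0..} z" and "0 < t"
    and "0 < e" and f_cont: "continuous_on (ball (z t) e) f"
  shows "(z has_vector_derivative f (z t)) (at t)"
proof -
  have z_cont: "continuous_on {0..} z"
    using filippov_solution_continuous_on[OF sol] .
  then have "isCont z t"
    using \<open>0 < t\<close> continuous_on_interior[of "{0..}" z t] by simp
  then obtain d where "0 < d" and d: "\<And>s. dist s t < d \<Longrightarrow> dist (z s) (z t) < e"
    using \<open>0 < e\<close> unfolding continuous_at_eps_delta by blast
  define a where "a = t - min d t / 2"
  define b where "b = t + min d t / 2"
  have ab: "0 < a" "a < t" "t < b"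
    using \<open>0 < d\<close> \<open>0 < t\<close> by (auto simp: a_def b_def)
  have z_near: "z s \<in> ball (z t) e" if "s \<in> {a..b}" for s
    using that d[of s] \<open>0 < d\<close> by (auto simp: a_def b_def dist_real_def dist_commute)
  have fz_cont: "continuous_on {a..b} (f \<circ> z)"
  proof (rule continuous_on_compose)
    show "continuous_on {a..b} z"
      using ab by (auto intro: continuous_on_subset[OF z_cont])
    show "continuous_on (z ` {a..b}) f"
      using z_near by (auto intro: continuous_on_subset[OF f_cont])
  qed
  have z_local: "integral {a..s} (f \<circ> z) + z a = z s" if "s \<in> {a..b}" for s
  proof (rule filippov_solution_integral_equation[OF sol])
    show "isCont f (z r)" if "r \<in> {a..s}" for r
      using f_cont z_near[of r] that \<open>s \<in> {a..b}\<close> by (simp add: continuous_on_eq_continuous_at)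
  qed (use ab that in auto)
  have "((\<lambda>s. integral {a..s} (f \<circ> z)) has_vector_derivative f (z t)) (at t within {a..b})"
    using integral_has_vector_derivative[OF fz_cont] ab by fastforce
  moreover have "at t within {a..b} = at t"
    using ab by (intro at_within_interior) simp
  ultimately have "((\<lambda>s. integral {a..s} (f \<circ> z) + z a) has_vector_derivative f (z t)) (at t)"
    by (simp only: has_vector_derivative_add_const)
  then show ?thesis
    by (rule has_vector_derivative_transform_within_open[OF _ open_greaterThanLessThan])
      (use ab z_local in auto)
qed

lemma filippov_solution_has_lie_derivative:
  fixes f :: "'a::euclidean_space \<Rightarrow> 'a" and V :: "'a \<Rightarrow> real"
  assumes sol: "filippov_solution f x0 {0..} z" and "0 < t"
    and "0 < e" and "continuous_on (ball (z t) e) f"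
    and "V differentiable (at (z t))"
  shows "((\<lambda>s. V (z s)) has_real_derivative lie_deriv V f (z t)) (at t)"
proof -
  let ?DV = "frechet_derivative V (at (z t))"
  have "(z has_derivative (\<lambda>u. u *\<^sub>R f (z t))) (at t)"
    using filippov_solution_has_vector_derivative[OF assms(1-4)]
    by (simp add: has_vector_derivative_def)
  moreover have DV: "(V has_derivative ?DV) (at (z t))"
    using assms(5) frechet_derivative_works by blast
  ultimately have "((V \<circ> z) has_derivative (\<lambda>u. ?DV (u *\<^sub>R f (z t)))) (at t)"
    using diff_chain_at by (fastforce simp: o_def)
  moreover have "?DV (u *\<^sub>R f (z t)) = u * ?DV (f (z t))" for u
    using linear_scale[OF has_derivative_linear[OF DV]] by simp
  ultimately show ?thesis
    by (simp add: has_real_derivative_iff_has_vector_derivative has_vector_derivative_def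
        lie_deriv_def o_def mult.commute)
qed

lemma C1_map_differentiable: "C1_map F \<Longrightarrow> F differentiable (at x)"
  unfolding C1_map_def differentiable_def by blast

lemma C1_map_continuous_on: "C1_map F \<Longrightarrow> continuous_on S F"
  by (metis C1_map_differentiable continuous_at_imp_continuous_on differentiable_imp_continuous_within)

section \<open>Scalar comparison\<close>

lemma nonincreasing_while_positive:
  fixes W W' :: "real \<Rightarrow> real"
  assumes cont: "continuous_on {0..} W" and nonneg: "\<And>t. 0 \<le> t \<Longrightarrow> 0 \<le> W t"
    and deriv: "\<And>t. 0 < t \<Longrightarrow> 0 < W t \<Longrightarrow> (W has_real_derivative W' t) (at t) \<and> W' t \<le> 0"
    and "0 \<le> s" "s \<le> t"
  shows "W t \<le> W s"
proof (rule ccontr)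
  assume "\<not> W t \<le> W s"
  define S where "S = {s..t} \<inter> W -` {..W s}"
  have "closed S"
    unfolding S_def using cont \<open>0 \<le> s\<close>
    by (intro continuous_closed_preimage) (auto intro: continuous_on_subset)
  moreover have "s \<in> S" and "bdd_above S"
    using \<open>s \<le> t\<close> by (auto simp: S_def)
  ultimately have "Sup S \<in> S"
    using closed_contains_Sup by blast
  define c where "c = Sup S"
  have "s \<le> c" "c \<le> t" "W c \<le> W s"
    using \<open>Sup S \<in> S\<close> \<open>s \<in> S\<close> \<open>bdd_above S\<close> by (auto simp: S_def c_def intro: cSup_upper)
  \<comment> \<open>After the last time c at which W is back at W s, it stays above W s \<ge> 0, hence decreases.\<close>
  have above: "W s < W x" if "c < x" "x \<le> t" for x
  proof (rule ccontr)
    assume "\<not> W s < W x"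
    then have "x \<in> S" using that \<open>s \<le> c\<close> by (auto simp: S_def)
    then show False using that \<open>bdd_above S\<close> by (auto simp: c_def dest: cSup_upper)
  qed
  have "W t \<le> W c"
  proof (rule DERIV_nonpos_imp_decreasing_open[OF \<open>c \<le> t\<close>])
    fix x assume "c < x" "x < t"
    then show "\<exists>y. (W has_real_derivative y) (at x) \<and> y \<le> 0"
      using deriv[of x] above[of x] nonneg[of s] \<open>0 \<le> s\<close> \<open>s \<le> c\<close> by force
  next
    show "continuous_on {c..t} W"
      using cont \<open>0 \<le> s\<close> \<open>s \<le> c\<close> by (auto intro: continuous_on_subset)
  qed
  then show False
    using \<open>W c \<le> W s\<close> \<open>\<not> W t \<le> W s\<close> by simp
qed

lemma powr_decay_rate:
  fixes W W' :: "real \<Rightarrow> real"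
  assumes "a \<le> b" and cont: "continuous_on {a..b} W" and pos: "\<And>x. x \<in> {a..b} \<Longrightarrow> 0 < W x"
    and deriv: "\<And>x. a < x \<Longrightarrow> x < b \<Longrightarrow>
      (W has_real_derivative W' x) (at x) \<and> W' x \<le> - k * W x powr q"
  shows "(1 - q) * (W b powr (1 - q) - W a powr (1 - q)) \<le> (1 - q) * (- (1 - q) * k * (b - a))"
proof -
  define G where "G x = (1 - q) * (W x powr (1 - q) + (1 - q) * k * x)" for x
  have "G b \<le> G a"
  proof (rule DERIV_nonpos_imp_decreasing_open[OF \<open>a \<le> b\<close>])
    fix x assume x: "a < x" "x < b"
    then have "0 < W x" using pos by simp
    obtain D where D: "(W has_real_derivative D) (at x)" "D \<le> - k * W x powr q"
      using deriv[OF x] by blast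
    have "(G has_real_derivative (1 - q) * ((1 - q) * W x powr (1 - q - 1) * D + (1 - q) * k)) (at x)"
      unfolding G_def
      by (intro DERIV_add DERIV_cmult DERIV_fun_powr[OF D(1) \<open>0 < W x\<close>, simplified] DERIV_cmult_Id)
    then have "(G has_real_derivative (1 - q)\<^sup>2 * (W x powr (- q) * D + k)) (at x)"
      by (simp add: power2_eq_square algebra_simps)
    moreover have "W x powr (- q) * D \<le> W x powr (- q) * (- k * W x powr q)"
      using D(2) by (intro mult_left_mono) auto
    then have "W x powr (- q) * D + k \<le> 0"
      using \<open>0 < W x\<close> by (simp add: powr_minus field_simps)
    then have "(1 - q)\<^sup>2 * (W x powr (- q) * D + k) \<le> 0"
      by (simp add: mult_nonneg_nonpos)
    ultimately show "\<exists>y. (G has_real_derivative y) (at x) \<and> y \<le> 0"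
      by blast
  next
    show "continuous_on {a..b} G"
      unfolding G_def using cont pos
      by (intro continuous_intros continuous_on_powr) force+
  qed
  then show ?thesis
    by (simp add: G_def algebra_simps)
qed

lemma powr_decay_superlinear:
  fixes W W' :: "real \<Rightarrow> real"
  assumes "1 < q" "a \<le> b" "continuous_on {a..b} W" "\<And>x. x \<in> {a..b} \<Longrightarrow> 0 < W x"
    and "\<And>x. a < x \<Longrightarrow> x < b \<Longrightarrow> (W has_real_derivative W' x) (at x) \<and> W' x \<le> - k * W x powr q"
  shows "W a powr (1 - q) + (q - 1) * k * (b - a) \<le> W b powr (1 - q)"
proof -
  have "(1 - q) * (W b powr (1 - q) - W a powr (1 - q)) \<le> (1 - q) * (- (1 - q) * k * (b - a))"
    using assms(2-5) by (rule powr_decay_rate)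
  moreover have "1 - q < 0"
    using \<open>1 < q\<close> by simp
  ultimately have "- (1 - q) * k * (b - a) \<le> W b powr (1 - q) - W a powr (1 - q)"
    by (simp only: mult_le_cancel_left_neg)
  then show ?thesis
    by (simp add: algebra_simps)
qed

lemma powr_decay_sublinear:
  fixes W W' :: "real \<Rightarrow> real"
  assumes "q < 1" "a \<le> b" "continuous_on {a..b} W" "\<And>x. x \<in> {a..b} \<Longrightarrow> 0 < W x"
    and "\<And>x. a < x \<Longrightarrow> x < b \<Longrightarrow> (W has_real_derivative W' x) (at x) \<and> W' x \<le> - k * W x powr q"
  shows "W b powr (1 - q) \<le> W a powr (1 - q) - (1 - q) * k * (b - a)"
proof -
  have "(1 - q) * (W b powr (1 - q) - W a powr (1 - q)) \<le> (1 - q) * (- (1 - q) * k * (b - a))"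
    using assms(2-5) by (rule powr_decay_rate)
  then have "W b powr (1 - q) - W a powr (1 - q) \<le> - (1 - q) * k * (b - a)"
    by (rule mult_left_le_imp_le) (use \<open>q < 1\<close> in simp)
  then show ?thesis
    by (simp add: algebra_simps)
qed

lemma fixed_time_decay:
  fixes W W' :: "real \<Rightarrow> real"
  assumes cont: "continuous_on {0..} W" and nonneg: "\<And>t. 0 \<le> t \<Longrightarrow> 0 \<le> W t"
    and deriv: "\<And>t. 0 < t \<Longrightarrow> 0 < W t \<Longrightarrow>
      (W has_real_derivative W' t) (at t) \<and> W' t \<le> - k1 * W t powr \<mu> - k2 * W t powr \<nu>"
    and "0 < k1" "0 < k2" "0 < \<mu>" "\<mu> < 1" "1 < \<nu>"
  shows "0 \<le> s \<Longrightarrow> s \<le> t \<Longrightarrow> W t \<le> W s"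
    and "1 / (k1 * (1 - \<mu>)) + 1 / (k2 * (\<nu> - 1)) \<le> t \<Longrightarrow> W t = 0"
proof -
  define T1 where "T1 = 1 / (k2 * (\<nu> - 1))"
  define T2 where "T2 = 1 / (k1 * (1 - \<mu>))"
  have "0 < T1" "0 < T2" "(\<nu> - 1) * k2 * T1 = 1" "(1 - \<mu>) * k1 * T2 = 1"
    using assms(4-8) by (auto simp: T1_def T2_def field_simps)
  have terms_pos: "0 < k1 * W x powr \<mu>" "0 < k2 * W x powr \<nu>" if "0 < W x" for x
    using that \<open>0 < k1\<close> \<open>0 < k2\<close> by simp_all
  have deriv_\<mu>: "(W has_real_derivative W' x) (at x) \<and> W' x \<le> - k1 * W x powr \<mu>"
    and deriv_\<nu>: "(W has_real_derivative W' x) (at x) \<and> W' x \<le> - k2 * W x powr \<nu>"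
    if "0 < x" "0 < W x" for x
    using deriv[OF that] terms_pos[OF that(2)] by auto
  have decreasing: "W y \<le> W x" if "0 \<le> x" "x \<le> y" for x y
  proof (rule nonincreasing_while_positive[OF cont nonneg _ that])
    show "(W has_real_derivative W' s) (at s) \<and> W' s \<le> 0" if "0 < s" "0 < W s" for s
      using deriv_\<mu>[OF that] terms_pos[OF that(2)] by auto
  qed
  then show "W t \<le> W s" if "0 \<le> s" "s \<le> t"
    using that .
  have cont_on: "continuous_on {x..y} W" if "0 \<le> x" for x y
    using cont that by (auto intro: continuous_on_subset)
  have "W T1 \<le> 1"
  proof (rule ccontr)
    assume "\<not> W T1 \<le> 1"
    then have W_pos: "0 < W x" if "x \<in> {0..T1}" for x
      using decreasing[of x T1] that by auto
    have "W 0 powr (1 - \<nu>) + (\<nu> - 1) * k2 * (T1 - 0) \<le> W T1 powr (1 - \<nu>)"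
      using \<open>1 < \<nu>\<close> \<open>0 < T1\<close> W_pos by (intro powr_decay_superlinear[where W' = W'] cont_on deriv_\<nu>) auto
    then have "W 0 powr (1 - \<nu>) + 1 \<le> W T1 powr (1 - \<nu>)"
      using \<open>(\<nu> - 1) * k2 * T1 = 1\<close> by simp
    moreover have "W T1 powr (1 - \<nu>) < 1"
      using \<open>\<not> W T1 \<le> 1\<close> \<open>1 < \<nu>\<close> by (simp add: powr_less_one)
    ultimately show False
      using powr_ge_zero[of "W 0" "1 - \<nu>"] by linarith
  qed
  have "W (T1 + T2) = 0"
  proof (rule ccontr)
    assume "W (T1 + T2) \<noteq> 0"
    then have W_pos: "0 < W x" if "x \<in> {T1..T1 + T2}" for x
      using decreasing[of x "T1 + T2"] nonneg[of "T1 + T2"] that \<open>0 < T1\<close> by force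
    have "W (T1 + T2) powr (1 - \<mu>) \<le> W T1 powr (1 - \<mu>) - (1 - \<mu>) * k1 * (T1 + T2 - T1)"
      using \<open>\<mu> < 1\<close> \<open>0 < T1\<close> \<open>0 < T2\<close> W_pos
      by (intro powr_decay_sublinear[where W' = W'] cont_on deriv_\<mu>) auto
    then have "W (T1 + T2) powr (1 - \<mu>) \<le> W T1 powr (1 - \<mu>) - 1"
      using \<open>(1 - \<mu>) * k1 * T2 = 1\<close> by simp
    moreover have "W T1 powr (1 - \<mu>) \<le> 1"
      using \<open>W T1 \<le> 1\<close> \<open>\<mu> < 1\<close> nonneg[of T1] \<open>0 < T1\<close> by (intro powr_le1) auto
    moreover have "0 < W (T1 + T2) powr (1 - \<mu>)"
      using \<open>W (T1 + T2) \<noteq> 0\<close> by simp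
    ultimately show False
      by linarith
  qed
  show "W t = 0" if "1 / (k1 * (1 - \<mu>)) + 1 / (k2 * (\<nu> - 1)) \<le> t"
  proof -
    have "T1 + T2 \<le> t"
      using that by (simp add: T1_def T2_def)
    then show ?thesis
      using \<open>W (T1 + T2) = 0\<close> decreasing[of "T1 + T2" t] nonneg[of t] \<open>0 < T1\<close> \<open>0 < T2\<close>
      by simp
  qed
qed

section \<open>Comparison functions\<close>

lemma class_K_nonneg: "class_K a \<Longrightarrow> 0 \<le> r \<Longrightarrow> 0 \<le> a r"
  unfolding class_K_def by (metis atLeast_iff order_refl strict_mono_on_leD)

lemma class_K_mono: "class_K a \<Longrightarrow> 0 \<le> r \<Longrightarrow> r \<le> s \<Longrightarrow> a r \<le> a s"
  unfolding class_K_def by (meson atLeast_iff order_trans strict_mono_on_leD)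

lemma class_K_less_iff: "class_K a \<Longrightarrow> 0 \<le> r \<Longrightarrow> 0 \<le> s \<Longrightarrow> a r < a s \<longleftrightarrow> r < s"
  unfolding class_K_def using strict_mono_on_less[of "{0..}" a r s] by simp

lemma class_K_le_zero_iff: "class_K a \<Longrightarrow> 0 \<le> r \<Longrightarrow> a r \<le> 0 \<longleftrightarrow> r = 0"
  using class_K_less_iff[of a 0 r] unfolding class_K_def by force

lemma class_K_sandwich:
  assumes "class_K \<xi>1" "class_K \<xi>2" "\<xi>1 (norm y) \<le> v" "v \<le> \<xi>2 (norm y)"
  shows "0 \<le> v" and "v = 0 \<longleftrightarrow> y = 0"
  using assms class_K_nonneg[OF assms(1)] class_K_le_zero_iff[OF assms(1)] class_K_le_zero_iff[OF assms(2)]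
  by (smt (verit) norm_eq_zero norm_ge_zero)+

lemma class_K_comp:
  assumes "class_K a" "class_K b"
  shows "class_K (\<lambda>r. a (b r))"
  unfolding class_K_def
proof (intro conjI)
  have "b ` {0..} \<subseteq> {0..}"
    using class_K_nonneg[OF assms(2)] by auto
  then show "continuous_on {0..} (\<lambda>r. a (b r))"
    using assms continuous_on_compose2[of "{0..}" a "{0..}" b] unfolding class_K_def by blast
  show "a (b 0) = 0"
    using assms unfolding class_K_def by simp
  show "strict_mono_on {0..} (\<lambda>r. a (b r))"
  proof (rule strict_mono_onI)
    fix r s :: real assume "r \<in> {0..}" "s \<in> {0..}" "r < s"
    then have "b r < b s" and "0 \<le> b r" "0 \<le> b s"
      using assms(2) class_K_less_iff class_K_nonneg by auto
    then show "a (b r) < a (b s)"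
      using assms(1) class_K_less_iff by blast
  qed
qed

lemma class_K_mono_add_id:
  assumes "continuous_on {0..} m" "m 0 = 0" "mono_on {0..} m"
  shows "class_K (\<lambda>r. m r + r)"
  unfolding class_K_def
proof (intro conjI)
  show "continuous_on {0..} (\<lambda>r. m r + r)"
    using assms(1) by (intro continuous_intros)
  show "m 0 + 0 = 0"
    using assms(2) by simp
  show "strict_mono_on {0..} (\<lambda>r. m r + r)"
  proof (rule strict_mono_onI)
    fix r s :: real assume "r \<in> {0..}" "s \<in> {0..}" "r < s"
    then have "m r \<le> m s"
      using assms(3) by (meson less_imp_le mono_onD)
    then show "m r + r < m s + s"
      using \<open>r < s\<close> by simp
  qed
qed

lemma class_KL_mult_cutoff:
  assumes K: "class_K K"
  shows "class_KL (\<lambda>r t. K r * min 1 (exp (T - t)))"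
  unfolding class_KL_def
proof (intro conjI allI impI)
  have "continuous_on {0..} K"
    using K by (simp add: class_K_def)
  then have "continuous_on ({0..} \<times> {0..}) (\<lambda>p. K (fst p))"
    by (rule continuous_on_compose2) (auto intro: continuous_intros)
  moreover have "continuous_on ({0..} \<times> {0..}) (\<lambda>p::real \<times> real. min 1 (exp (T - snd p)))"
    by (intro continuous_intros)
  ultimately show "continuous_on ({0..} \<times> {0..}) (\<lambda>(r, t). K r * min 1 (exp (T - t)))"
    unfolding case_prod_beta' by (intro continuous_intros)
next
  fix t :: real
  have "0 < min 1 (exp (T - t))" by simp
  then show "class_K (\<lambda>r. K r * min 1 (exp (T - t)))"
    using K by (auto simp: class_K_def strict_mono_on_def intro!: continuous_intros)
next
  fix r :: real assume "0 \<le> r"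
  then have "0 \<le> K r"
    using class_K_nonneg[OF K] by simp
  then show "antimono_on {0..} (\<lambda>t. K r * min 1 (exp (T - t)))"
    by (intro monotone_onI mult_left_mono) (auto simp: min_def)
  have "((\<lambda>t. exp T / exp t) \<longlongrightarrow> 0) at_top"
    by (intro tendsto_divide_0[OF tendsto_const] filterlim_at_top_imp_at_infinity exp_at_top)
  then have "((\<lambda>t. min 1 (exp (T - t))) \<longlongrightarrow> min 1 0) at_top"
    by (intro tendsto_min tendsto_const) (simp add: exp_diff)
  then show "((\<lambda>t. K r * min 1 (exp (T - t))) \<longlongrightarrow> 0) at_top"
    using tendsto_mult_left[of _ 0 at_top "K r"] by simp
qed

lemma class_Kinf_inverse:
  assumes "class_Kinf \<xi>"
  obtains \<eta> where "class_K \<eta>" "\<And>u. 0 \<le> u \<Longrightarrow> \<eta> (\<xi> u) = u" "\<And>y. 0 \<le> y \<Longrightarrow> \<xi> (\<eta> y) = y"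
proof -
  have K: "class_K \<xi>" and "continuous_on {0..} \<xi>" "\<xi> 0 = 0"
    using assms by (auto simp: class_Kinf_def class_K_def)
  have unbounded: "\<exists>R\<ge>0. y \<le> \<xi> R" for y
  proof -
    have "eventually (\<lambda>x. y \<le> \<xi> x) at_top"
      using assms by (simp add: class_Kinf_def filterlim_at_top)
    then obtain N where "\<And>x. N \<le> x \<Longrightarrow> y \<le> \<xi> x"
      by (auto simp: eventually_at_top_linorder)
    then show ?thesis
      by (intro exI[of _ "max N 0"]) auto
  qed
  have onto: "{0..\<xi> R} \<subseteq> \<xi> ` {0..R}" if "0 \<le> R" for R
  proof
    fix y assume "y \<in> {0..\<xi> R}"
    moreover have "continuous_on {0..R} \<xi>"
      using \<open>continuous_on {0..} \<xi>\<close> by (auto intro: continuous_on_subset)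
    ultimately show "y \<in> \<xi> ` {0..R}"
      using IVT'[of \<xi> 0 y R] \<open>\<xi> 0 = 0\<close> that by auto
  qed
  have inj: "inj_on \<xi> {0..}"
    using K unfolding class_K_def by (rule conjE) (auto intro: strict_mono_on_imp_inj_on)
  define \<eta> where "\<eta> = inv_into {0..} \<xi>"
  have \<eta>_\<xi>: "\<eta> (\<xi> u) = u" if "0 \<le> u" for u
    using inv_into_f_f[OF inj] that by (simp add: \<eta>_def)
  have \<xi>_\<eta>: "\<xi> (\<eta> y) = y" and \<eta>_nonneg: "0 \<le> \<eta> y" if "0 \<le> y" for y
  proof -
    obtain R where "0 \<le> R" "y \<le> \<xi> R"
      using unbounded by blast
    then have "y \<in> \<xi> ` {0..}"
      using onto[of R] that by auto
    then show "\<xi> (\<eta> y) = y" "0 \<le> \<eta> y"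
      unfolding \<eta>_def using f_inv_into_f[of y \<xi>] inv_into_into[of y \<xi> "{0..}"] by auto
  qed
  have "continuous (at y within {0..}) \<eta>" if "0 \<le> y" for y
  proof -
    obtain R where "0 \<le> R" "y + 1 \<le> \<xi> R"
      using unbounded by blast
    have "continuous_on (\<xi> ` {0..R}) \<eta>"
      using \<open>continuous_on {0..} \<xi>\<close> \<eta>_\<xi>
      by (intro continuous_on_inv continuous_on_subset[OF \<open>continuous_on {0..} \<xi>\<close>]) auto
    then have "continuous_on {0..\<xi> R} \<eta>"
      using onto[OF \<open>0 \<le> R\<close>] by (rule continuous_on_subset)
    then have "continuous (at y within {0..\<xi> R}) \<eta>"
      using that \<open>y + 1 \<le> \<xi> R\<close> by (simp add: continuous_on_eq_continuous_within)
    moreover have "at y within {0..} = at y within {0..\<xi> R}"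
      using \<open>y + 1 \<le> \<xi> R\<close> by (intro at_within_nhd[of _ "{..<\<xi> R}"]) auto
    ultimately show ?thesis
      by simp
  qed
  then have "continuous_on {0..} \<eta>"
    by (simp add: continuous_on_eq_continuous_within)
  moreover have "strict_mono_on {0..} \<eta>"
  proof (rule strict_mono_onI)
    fix r s :: real assume "r \<in> {0..}" "s \<in> {0..}" "r < s"
    then show "\<eta> r < \<eta> s"
      using class_K_less_iff[OF K, of "\<eta> r" "\<eta> s"] \<xi>_\<eta> \<eta>_nonneg by auto
  qed
  moreover have "\<eta> 0 = 0"
    using \<eta>_\<xi>[of 0] \<open>\<xi> 0 = 0\<close> by simp
  ultimately show ?thesis
    using that \<eta>_\<xi> \<xi>_\<eta> by (simp add: class_K_def)
qed

lemma norm_le_class_K_majorant: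
  fixes h :: "'a::euclidean_space \<Rightarrow> 'b::real_normed_vector"
  assumes h_cont: "continuous_on UNIV h" and "h 0 = 0"
  obtains \<alpha> where "class_K \<alpha>" "\<And>x. norm (h x) \<le> \<alpha> (norm x)"
proof -
  define m where "m r = Sup ((\<lambda>x. norm (h x)) ` cball 0 r)" for r
  have "bdd_above ((\<lambda>x. norm (h x)) ` cball 0 r)" for r
    by (intro bounded_imp_bdd_above compact_imp_bounded compact_continuous_image
        continuous_intros continuous_on_subset[OF h_cont]) auto
  then have upper: "norm (h x) \<le> m r" if "norm x \<le> r" for x r
    unfolding m_def using that by (intro cSup_upper) auto
  have least: "m r \<le> c" if "0 \<le> r" "\<And>x. norm x \<le> r \<Longrightarrow> norm (h x) \<le> c" for r c
    unfolding m_def using that by (intro cSup_least) auto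
  have "m 0 = 0"
    using least[of 0 0] upper[of 0 0] \<open>h 0 = 0\<close> by simp
  have mono: "m r \<le> m s" if "0 \<le> r" "r \<le> s" for r s
    using least[of r "m s"] upper[of _ s] that by force
  \<comment> \<open>Shrinking the ball radially by the factor b / a moves points by at most a - b.\<close>
  have close: "\<exists>d>0. \<forall>a b. 0 \<le> b \<longrightarrow> b \<le> a \<longrightarrow> a \<le> R \<longrightarrow> a - b < d \<longrightarrow> m a \<le> m b + e"
    if "0 < e" for R e
  proof -
    obtain d where "0 < d" and d: "\<And>x x'. x \<in> cball 0 R \<Longrightarrow> x' \<in> cball 0 R \<Longrightarrow>
        dist x' x < d \<Longrightarrow> dist (h x') (h x) < e"
      using compact_uniformly_continuous[OF continuous_on_subset[OF h_cont], of "cball 0 R"] \<open>0 < e\<close>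
      unfolding uniformly_continuous_on_def by fastforce
    have "m a \<le> m b + e" if ab: "0 \<le> b" "b \<le> a" "a \<le> R" "a - b < d" for a b
    proof (cases "a = b")
      case True
      then show ?thesis using \<open>0 < e\<close> by simp
    next
      case False
      show ?thesis
      proof (rule least)
        fix x :: 'a assume x: "norm x \<le> a"
        define x' where "x' = (b / a) *\<^sub>R x"
        have "0 < a" "0 \<le> b / a" "b / a \<le> 1"
          using ab False by auto
        have "norm x' = b / a * norm x"
          using ab by (simp add: x'_def)
        also have "\<dots> \<le> b / a * a"
          using x \<open>0 \<le> b / a\<close> by (rule mult_left_mono)
        finally have "norm x' \<le> b"
          using \<open>0 < a\<close> by simp
        have "dist x' x = norm ((1 - b / a) *\<^sub>R x)"
          by (simp add: x'_def dist_norm algebra_simps norm_minus_commute)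
        also have "\<dots> \<le> (1 - b / a) * a"
          using x \<open>b / a \<le> 1\<close> by (simp add: mult_left_mono)
        also have "\<dots> < d"
          using ab \<open>0 < a\<close> by (simp add: algebra_simps)
        finally have "dist x' x < d" .
        then have "norm (h x) < m b + e"
          using \<open>norm x' \<le> b\<close> d[of x x'] upper[of x' b] x ab norm_triangle_ineq3[of "h x" "h x'"]
          by (simp add: dist_norm norm_minus_commute)
        then show "norm (h x) \<le> m b + e"
          by simp
      qed (use ab in simp)
    qed
    then show ?thesis
      using \<open>0 < d\<close> by blast
  qed
  have "continuous_on {0..} m"
    unfolding continuous_on_iff
  proof (intro ballI allI impI)
    fix r e :: real assume "r \<in> {0..}" "0 < e"
    then obtain d where "0 < d" and d: "\<And>a b. 0 \<le> b \<Longrightarrow> b \<le> a \<Longrightarrow> a \<le> r + 1 \<Longrightarrow> a - b < d \<Longrightarrow>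
        m a \<le> m b + e / 2"
      using close[of "e / 2" "r + 1"] by auto
    have "dist (m s) (m r) < e" if "s \<in> {0..}" "dist s r < min d 1" for s
      using that \<open>r \<in> {0..}\<close> \<open>0 < e\<close> d[of s r] d[of r s] mono[of s r] mono[of r s]
      by (cases "s \<le> r") (auto simp: dist_real_def abs_less_iff)
    then show "\<exists>d>0. \<forall>s\<in>{0..}. dist s r < d \<longrightarrow> dist (m s) (m r) < e"
      using \<open>0 < d\<close> by (intro exI[of _ "min d 1"]) auto
  qed
  then have "class_K (\<lambda>r. m r + r)"
    using \<open>m 0 = 0\<close> mono by (intro class_K_mono_add_id monotone_onI) auto
  moreover have "norm (h x) \<le> m (norm x) + norm x" for x
    using upper[of x "norm x"] norm_ge_zero[of x] by linarith
  ultimately show ?thesis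
    using that by blast
qed

section \<open>Output stability\<close>

lemma lyapunov_fixed_time_along_solution:
  fixes f :: "'a::euclidean_space \<Rightarrow> 'a" and h :: "'a \<Rightarrow> 'b::real_normed_vector"
    and V :: "'a \<Rightarrow> real"
  assumes sol: "filippov_solution f x0 {0..} z"
    and f_cont: "\<And>x. h x \<noteq> 0 \<Longrightarrow> \<exists>e>0. continuous_on (ball x e) f"
    and V_diff: "\<And>x. V differentiable (at x)"
    and V_nonneg: "\<And>x. 0 \<le> V x" and V_eq_0: "\<And>x. V x = 0 \<longleftrightarrow> h x = 0"
    and decay: "\<And>x. h x \<noteq> 0 \<Longrightarrow> lie_deriv V f x \<le> - k1 * V x powr \<mu> - k2 * V x powr \<nu>"
    and "0 < k1" "0 < k2" "0 < \<mu>" "\<mu> < 1" "1 < \<nu>"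
  shows "0 \<le> t \<Longrightarrow> V (z t) \<le> V x0"
    and "1 / (k1 * (1 - \<mu>)) + 1 / (k2 * (\<nu> - 1)) \<le> t \<Longrightarrow> h (z t) = 0"
proof -
  have "continuous_on UNIV V"
    using V_diff by (simp add: continuous_at_imp_continuous_on differentiable_imp_continuous_within)
  then have cont: "continuous_on {0..} (\<lambda>t. V (z t))"
    using filippov_solution_continuous_on[OF sol] by (rule continuous_on_compose2) auto
  have deriv: "((\<lambda>s. V (z s)) has_real_derivative lie_deriv V f (z t)) (at t) \<and>
      lie_deriv V f (z t) \<le> - k1 * V (z t) powr \<mu> - k2 * V (z t) powr \<nu>"
    if "0 < t" "0 < V (z t)" for t
  proof -
    have "h (z t) \<noteq> 0"
      using V_eq_0 that(2) by force
    then show ?thesis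
      using f_cont filippov_solution_has_lie_derivative[OF sol \<open>0 < t\<close> _ _ V_diff] decay by blast
  qed
  note W = fixed_time_decay[where W = "\<lambda>t. V (z t)" and W' = "\<lambda>t. lie_deriv V f (z t)"
      and ?k1.0 = k1 and ?k2.0 = k2 and \<mu> = \<mu> and \<nu> = \<nu>]
  show "V (z t) \<le> V x0" if "0 \<le> t"
  proof -
    have "V (z t) \<le> V (z 0)"
      by (rule W(1)) (use cont V_nonneg deriv assms(7-11) that in auto)
    then show ?thesis
      using sol by (simp add: filippov_solution_def)
  qed
  show "h (z t) = 0" if "1 / (k1 * (1 - \<mu>)) + 1 / (k2 * (\<nu> - 1)) \<le> t"
  proof -
    have "V (z t) = 0"
      by (rule W(2)) (use cont V_nonneg deriv assms(7-11) that in auto)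
    then show ?thesis
      using V_eq_0 by simp
  qed
qed

lemma output_stability_from_lyapunov_sandwich:
  fixes h :: "'a::euclidean_space \<Rightarrow> 'b::real_normed_vector" and \<Phi> :: "real \<Rightarrow> 'a \<Rightarrow> 'a"
  assumes "continuous_on UNIV h" "h 0 = 0"
    and "class_Kinf \<xi>1" "class_K \<xi>2"
    and sandwich: "\<And>x. \<xi>1 (norm (h x)) \<le> V x \<and> V x \<le> \<xi>2 (norm (h x))"
    and V_decr: "\<And>x0 t. 0 \<le> t \<Longrightarrow> V (\<Phi> t x0) \<le> V x0"
    and settled: "\<And>x0 t. T \<le> t \<Longrightarrow> h (\<Phi> t x0) = 0"
  shows "SIoGAS h \<Phi> \<and> oGAS h \<Phi>"
proof -
  obtain \<eta> where "class_K \<eta>" and \<eta>_\<xi>1: "\<And>u. 0 \<le> u \<Longrightarrow> \<eta> (\<xi>1 u) = u"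
    using class_Kinf_inverse[OF \<open>class_Kinf \<xi>1\<close>] by metis
  define K where "K r = \<eta> (\<xi>2 r)" for r
  define c where "c t = min 1 (exp (T - t))" for t
  have "class_K K"
    unfolding K_def using \<open>class_K \<eta>\<close> \<open>class_K \<xi>2\<close> by (rule class_K_comp)
  have bound: "norm (h (\<Phi> t x0)) \<le> K (norm (h x0)) * c t" if "0 \<le> t" for t x0
  proof (cases "t < T")
    case True
    have "\<xi>1 (norm (h (\<Phi> t x0))) \<le> \<xi>2 (norm (h x0))"
      using sandwich[of "\<Phi> t x0"] sandwich[of x0] V_decr[OF that, of x0] by linarith
    then have "norm (h (\<Phi> t x0)) \<le> K (norm (h x0))"
      using class_K_mono[OF \<open>class_K \<eta>\<close>] class_K_nonneg[OF \<open>class_Kinf \<xi>1\<close>[unfolded class_Kinf_def, THEN conjunct1]]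
        \<eta>_\<xi>1[of "norm (h (\<Phi> t x0))"] unfolding K_def by (metis norm_ge_zero)
    moreover have "c t = 1"
      using True by (simp add: c_def)
    ultimately show ?thesis
      by simp
  next
    case False
    then show ?thesis
      using settled[of t x0] class_K_nonneg[OF \<open>class_K K\<close>, of "norm (h x0)"] by (simp add: c_def)
  qed
  have "SIoGAS h \<Phi>"
    unfolding SIoGAS_def c_def using class_KL_mult_cutoff[OF \<open>class_K K\<close>] bound[unfolded c_def] by blast
  moreover obtain \<alpha> where "class_K \<alpha>" and \<alpha>: "\<And>x. norm (h x) \<le> \<alpha> (norm x)"
    using norm_le_class_K_majorant[OF assms(1,2)] by blast
  have "oGAS h \<Phi>"
    unfolding oGAS_def
  proof (intro exI[of _ "\<lambda>r t. K (\<alpha> r) * c t"] conjI allI impI)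
    show "class_KL (\<lambda>r t. K (\<alpha> r) * c t)"
      unfolding c_def by (rule class_KL_mult_cutoff[OF class_K_comp[OF \<open>class_K K\<close> \<open>class_K \<alpha>\<close>]])
    fix t :: real and x0 :: 'a assume "0 \<le> t"
    have "K (norm (h x0)) * c t \<le> K (\<alpha> (norm x0)) * c t"
      using class_K_mono[OF \<open>class_K K\<close> _ \<alpha>] by (intro mult_right_mono) (simp_all add: c_def)
    then show "norm (h (\<Phi> t x0)) \<le> K (\<alpha> (norm x0)) * c t"
      using bound[OF \<open>0 \<le> t\<close>, of x0] by linarith
  qed
  ultimately show ?thesis
    by blast
qed

lemma settling_time_le:
  assumes "0 \<le> T" and "\<And>t. T \<le> t \<Longrightarrow> h (\<Phi> t x0) = 0"
  shows "settling_time h \<Phi> x0 \<le> T"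
  unfolding settling_time_def using assms by (intro cInf_lower bdd_belowI[of _ 0]) auto

theorem corollary1:
  fixes f :: "real^'n \<Rightarrow> real^'n"
    and h :: "real^'n \<Rightarrow> real^'p"
    and \<Phi> :: "real \<Rightarrow> real^'n \<Rightarrow> real^'n"
    and V :: "real^'n \<Rightarrow> real"
    and k1 k2 \<mu> \<nu> :: real
  assumes A1_sol: "\<And>x0. filippov_solution f x0 {0..} (\<lambda>t. \<Phi> t x0)"
    and A1_uniq: "\<And>x0 T z. filippov_solution f x0 {0..<T} z \<Longrightarrow> \<forall>t\<in>{0..<T}. z t = \<Phi> t x0"
    and f0: "f 0 = 0"
    and A2: "C1_map h" and h0: "h 0 = 0"
    and A3: "\<And>x. h x \<noteq> 0 \<Longrightarrow> \<exists>e>0. \<exists>L. L-lipschitz_on (ball x e) f"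
    and Lyap: "SIoGAS_Lyapunov f h V"
    and k1: "k1 > 0" and k2: "k2 > 0" and mu: "0 < \<mu>" "\<mu> < 1" and nu: "\<nu> > 1"
    and decay: "\<And>x. h x \<noteq> 0 \<Longrightarrow> lie_deriv V f x \<le> - k1 * V x powr \<mu> - k2 * V x powr \<nu>"
  shows "SIoGAS h \<Phi> \<and> OFxTS h \<Phi> \<and>
         (\<forall>x0. settling_time h \<Phi> x0 \<le> 1 / (k1 * (1 - \<mu>)) + 1 / (k2 * (\<nu> - 1)))"
proof -
  define T where "T = 1 / (k1 * (1 - \<mu>)) + 1 / (k2 * (\<nu> - 1))"
  have "0 \<le> T"
    using k1 k2 mu nu by (simp add: T_def)
  obtain \<xi>1 \<xi>2 where "C1_map V" "class_Kinf \<xi>1" "class_Kinf \<xi>2"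
    and sandwich: "\<And>x. \<xi>1 (norm (h x)) \<le> V x \<and> V x \<le> \<xi>2 (norm (h x))"
    using Lyap unfolding SIoGAS_Lyapunov_def by blast
  then have "class_K \<xi>1" "class_K \<xi>2"
    by (simp_all add: class_Kinf_def)
  have V_nonneg: "0 \<le> V x" and V_eq_0: "V x = 0 \<longleftrightarrow> h x = 0" for x
    using class_K_sandwich[OF \<open>class_K \<xi>1\<close> \<open>class_K \<xi>2\<close>] sandwich[of x] by blast+
  note V_diff = C1_map_differentiable[OF \<open>C1_map V\<close>]
  have f_cont: "\<exists>e>0. continuous_on (ball x e) f" if "h x \<noteq> 0" for x
    using A3[OF that] lipschitz_on_continuous_on by blast
  note along_solution =
    lyapunov_fixed_time_along_solution[where ?k1.0 = k1 and ?k2.0 = k2 and \<mu> = \<mu> and \<nu> = \<nu>, OF A1_sol]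
  have V_decr: "V (\<Phi> t x0) \<le> V x0" if "0 \<le> t" for t x0
    by (rule along_solution(1)) (use f_cont V_diff V_nonneg V_eq_0 decay k1 k2 mu nu that in auto)
  have settled: "h (\<Phi> t x0) = 0" if "T \<le> t" for t x0
    by (rule along_solution(2)) (use f_cont V_diff V_nonneg V_eq_0 decay k1 k2 mu nu that T_def in auto)
  have "SIoGAS h \<Phi> \<and> oGAS h \<Phi>"
    using C1_map_continuous_on[OF A2] h0 \<open>class_Kinf \<xi>1\<close> \<open>class_K \<xi>2\<close> sandwich V_decr settled
    by (rule output_stability_from_lyapunov_sandwich)
  moreover have "settling_time h \<Phi> x0 \<le> T" for x0
    using \<open>0 \<le> T\<close> settled by (rule settling_time_le)
  ultimately show ?thesis
    using \<open>0 \<le> T\<close> settled unfolding OFxTS_def OFTS_def T_def[symmetric]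
    by (auto intro!: bdd_aboveI[of _ T] exI[of _ T])
qed

end
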